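(* Let $F$ be a non-archimedean local field over a dyadic place, with valuation ring $\mathfrak{o}$ and maximal ideal $\mathfrak{p}$. Let $\lambda\in\mathfrak{o}$, $\lambda\neq 0$, with $ord_\mathfrak{p}(\lambda)\in\{0,1\}$. Then the lattice $\mathfrak{o}^2$ is $\mathfrak{o}$-maximal for the quadratic form $q(x,y)=x^2+\lambda y^2$ on $F^2$ if and only if $\mathfrak{d}(-\lambda)=\mathfrak{p}$.
   Context: A lattice is a finitely generated $\mathfrak{o}$-submodule spanning $F^2$; its norm $\mathfrak{n}\Lambda$ is the fractional ideal generated by $q(\Lambda)$; $\Lambda$ is $\mathfrak{o}$-maximal if $\mathfrak{n}\Lambda\subset\mathfrak{o}$ and no lattice $\Lambda'\supsetneq\Lambda$ has $\mathfrak{n}\Lambda'\subset\mathfrak{o}$. The quadratic defect of $\alpha\in F$ is $\mathfrak{d}(\alpha)=\bigcap_{\xi\in F}(\alpha-\xi^2)\mathfrak{o}$ (so $\mathfrak{d}(\alpha)=0$ if $\alpha$ is a square). *)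

theory Defs
  imports Main "HOL-Library.Product_Plus"
begin

text \<open>A normalized discrete valuation v on a field, given on nonzero elements
  (the value at 0 is irrelevant and never used; 0 is treated as having valuation +infinity).\<close>

definition discrete_valuation :: "('a::field \<Rightarrow> int) \<Rightarrow> bool" where
  "discrete_valuation v \<longleftrightarrow>
     (\<forall>x y. x \<noteq> 0 \<longrightarrow> y \<noteq> 0 \<longrightarrow> v (x * y) = v x + v y) \<and>
     (\<forall>x y. x \<noteq> 0 \<longrightarrow> y \<noteq> 0 \<longrightarrow> x + y \<noteq> 0 \<longrightarrow> v (x + y) \<ge> min (v x) (v y)) \<and>
     (\<exists>\<pi>. \<pi> \<noteq> 0 \<and> v \<pi> = 1)"

definition val_ring :: "('a::field \<Rightarrow> int) \<Rightarrow> 'a set" where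
  "val_ring v = {x. x = 0 \<or> v x \<ge> 0}"

definition val_ideal :: "('a::field \<Rightarrow> int) \<Rightarrow> 'a set" where
  "val_ideal v = {x. x = 0 \<or> v x \<ge> 1}"

definition val_complete :: "('a::field \<Rightarrow> int) \<Rightarrow> bool" where
  "val_complete v \<longleftrightarrow>
     (\<forall>s :: nat \<Rightarrow> 'a.
        (\<forall>N::int. \<exists>M. \<forall>m\<ge>M. \<forall>n\<ge>M. s m = s n \<or> v (s m - s n) \<ge> N) \<longrightarrow>
        (\<exists>L. \<forall>N::int. \<exists>M. \<forall>n\<ge>M. s n = L \<or> v (s n - L) \<ge> N))"

definition finite_residue_field :: "('a::field \<Rightarrow> int) \<Rightarrow> bool" where
  "finite_residue_field v \<longleftrightarrow>
     (\<exists>S. finite S \<and> S \<subseteq> val_ring v \<and>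
          (\<forall>x\<in>val_ring v. \<exists>s\<in>S. x - s \<in> val_ideal v))"

text \<open>A dyadic non-archimedean local field: a field of characteristic 0 (type class),
  complete for a normalized discrete valuation with finite residue field of characteristic 2
  (i.e. 2 lies in the maximal ideal).\<close>
definition dyadic_local_field :: "('a::field_char_0 \<Rightarrow> int) \<Rightarrow> bool" where
  "dyadic_local_field v \<longleftrightarrow>
     discrete_valuation v \<and> val_complete v \<and> finite_residue_field v \<and>
     (2::'a) \<in> val_ideal v"

definition smul2 :: "'a::field \<Rightarrow> 'a \<times> 'a \<Rightarrow> 'a \<times> 'a" where
  "smul2 a w = (a * fst w, a * snd w)"

definition span2 :: "'a::field set \<Rightarrow> ('a \<times> 'a) set \<Rightarrow> ('a \<times> 'a) set" where
  "span2 R G = {w. \<exists>c. (\<forall>g\<in>G. c g \<in> R) \<and> w = (\<Sum>g\<in>G. smul2 (c g) g)}"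

definition is_lattice :: "('a::field \<Rightarrow> int) \<Rightarrow> ('a \<times> 'a) set \<Rightarrow> bool" where
  "is_lattice v L \<longleftrightarrow>
     (\<exists>G. finite G \<and> L = span2 (val_ring v) G) \<and>
     (\<forall>w. \<exists>G. finite G \<and> G \<subseteq> L \<and> w \<in> span2 UNIV G)"

definition o_submodule :: "('a::field \<Rightarrow> int) \<Rightarrow> 'a set \<Rightarrow> bool" where
  "o_submodule v M \<longleftrightarrow> 0 \<in> M \<and> (\<forall>x\<in>M. \<forall>y\<in>M. x + y \<in> M) \<and>
     (\<forall>a\<in>val_ring v. \<forall>x\<in>M. a * x \<in> M)"

definition o_gen :: "('a::field \<Rightarrow> int) \<Rightarrow> 'a set \<Rightarrow> 'a set" where
  "o_gen v S = \<Inter> {M. o_submodule v M \<and> S \<subseteq> M}"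

definition lattice_norm :: "('a::field \<Rightarrow> int) \<Rightarrow> ('a \<times> 'a \<Rightarrow> 'a) \<Rightarrow> ('a \<times> 'a) set \<Rightarrow> 'a set" where
  "lattice_norm v q L = o_gen v (q ` L)"

definition o_maximal :: "('a::field \<Rightarrow> int) \<Rightarrow> ('a \<times> 'a \<Rightarrow> 'a) \<Rightarrow> ('a \<times> 'a) set \<Rightarrow> bool" where
  "o_maximal v q L \<longleftrightarrow>
     is_lattice v L \<and> lattice_norm v q L \<subseteq> val_ring v \<and>
     \<not> (\<exists>L'. is_lattice v L' \<and> L \<subset> L' \<and> lattice_norm v q L' \<subseteq> val_ring v)"

definition quad_defect :: "('a::field \<Rightarrow> int) \<Rightarrow> 'a \<Rightarrow> 'a set" where
  "quad_defect v \<alpha> = (\<Inter>\<xi>. {(\<alpha> - \<xi>^2) * t | t. t \<in> val_ring v})"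

end

theory Submission
  imports Defs
begin

text \<open>
  The lattice \<open>o\<^sup>2\<close> fails to be maximal exactly when it has a proper overlattice of integral
  norm. Such an overlattice contains a vector \<open>(a, b) / \<pi>\<close> with \<open>(a, b)\<close> primitive in \<open>o\<^sup>2\<close>
  and \<open>a\<^sup>2 + \<lambda> b\<^sup>2 \<in> p\<^sup>2\<close>; conversely, adjoining such a vector keeps the norm integral because
  \<open>2 \<in> p\<close>. If \<open>ord \<lambda> = 1\<close> no such \<open>(a, b)\<close> exists, and if \<open>ord \<lambda> = 0\<close> they correspond to
  \<open>\<xi> = a / b\<close> with \<open>-\<lambda> - \<xi>\<^sup>2 \<in> p\<^sup>2\<close>. Finally, squaring is bijective on the finite residue
  field of characteristic 2, so \<open>-\<lambda>\<close> is a square modulo \<open>p\<close>; hence \<open>d(-\<lambda>) \<subseteq> p\<close>, with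
  equality iff \<open>-\<lambda>\<close> is not a square modulo \<open>p\<^sup>2\<close>.
\<close>

text \<open>\<open>val_ge v x k\<close> says \<open>x \<in> p\<^sup>k\<close>; the value \<open>v 0\<close> is junk, so \<open>0\<close> is treated separately.\<close>

definition val_ge :: "('a::field \<Rightarrow> int) \<Rightarrow> 'a \<Rightarrow> int \<Rightarrow> bool" where
  "val_ge v x k \<longleftrightarrow> x = 0 \<or> k \<le> v x"

lemma val_ring_iff_val_ge: "x \<in> val_ring v \<longleftrightarrow> val_ge v x 0"
  by (auto simp: val_ring_def val_ge_def)

lemma val_ideal_iff_val_ge: "x \<in> val_ideal v \<longleftrightarrow> val_ge v x 1"
  by (auto simp: val_ideal_def val_ge_def)

lemma val_ge_zero [simp]: "val_ge v 0 k"
  by (simp add: val_ge_def)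

lemma val_ge_mono: "val_ge v x l \<Longrightarrow> k \<le> l \<Longrightarrow> val_ge v x k"
  by (auto simp: val_ge_def)

lemma val_ge_self: "val_ge v x (v x)"
  by (simp add: val_ge_def)

locale valued_field =
  fixes v :: "'a::field \<Rightarrow> int"
  assumes discrete_valuation: "discrete_valuation v"
begin

lemma val_mult: "x \<noteq> 0 \<Longrightarrow> y \<noteq> 0 \<Longrightarrow> v (x * y) = v x + v y"
  using discrete_valuation by (auto simp: discrete_valuation_def)

lemma val_add_ge_min: "x \<noteq> 0 \<Longrightarrow> y \<noteq> 0 \<Longrightarrow> x + y \<noteq> 0 \<Longrightarrow> min (v x) (v y) \<le> v (x + y)"
  using discrete_valuation by (auto simp: discrete_valuation_def)

lemma uniformizer_exists: obtains \<pi> where "\<pi> \<noteq> 0" "v \<pi> = 1"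
  using discrete_valuation by (auto simp: discrete_valuation_def)

lemma val_one [simp]: "v 1 = 0"
  using val_mult[of 1 1] by simp

lemma val_minus: "v (- x) = v x" if "x \<noteq> 0"
proof -
  have "v (-1) = 0" using val_mult[of "-1" "-1"] by simp
  then show ?thesis using val_mult[of "-1" x] that by simp
qed

lemma val_inverse: "x \<noteq> 0 \<Longrightarrow> v (inverse x) = - v x"
  using val_mult[of x "inverse x"] by simp

lemma val_power2: "x \<noteq> 0 \<Longrightarrow> v (x\<^sup>2) = 2 * v x"
  using val_mult[of x x] by (simp add: power2_eq_square)

lemma val_ge_add: "val_ge v x k \<Longrightarrow> val_ge v y k \<Longrightarrow> val_ge v (x + y) k"
  using val_add_ge_min[of x y] unfolding val_ge_def
  by (cases "x = 0"; cases "y = 0"; cases "x + y = 0") auto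

lemma val_ge_minus_iff [simp]: "val_ge v (- x) k \<longleftrightarrow> val_ge v x k"
  using val_minus[of x] unfolding val_ge_def by (cases "x = 0") auto

lemma val_ge_diff: "val_ge v x k \<Longrightarrow> val_ge v y k \<Longrightarrow> val_ge v (x - y) k"
  using val_ge_add[of x k "- y"] by simp

lemma val_ge_mult: "val_ge v x k \<Longrightarrow> val_ge v y l \<Longrightarrow> val_ge v (x * y) (k + l)"
  using val_mult[of x y] unfolding val_ge_def by (cases "x = 0"; cases "y = 0") auto

lemma val_ge_mult_integral: "val_ge v x 0 \<Longrightarrow> val_ge v y 0 \<Longrightarrow> val_ge v (x * y) 0"
  using val_ge_mult[of x 0 y 0] by simp

lemma val_ge_inverse: "x \<noteq> 0 \<Longrightarrow> val_ge v (inverse x) (- v x)"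
  using val_inverse[of x] by (simp add: val_ge_def)

lemma val_ge_power2: "val_ge v x k \<Longrightarrow> val_ge v (x\<^sup>2) (2 * k)"
  using val_ge_mult[of x k x k] by (simp add: power2_eq_square)

lemma val_ge_power2_integral: "val_ge v x 0 \<Longrightarrow> val_ge v (x\<^sup>2) 0"
  using val_ge_power2[of x 0] by simp

lemma val_ge_of_power2: "val_ge v (x\<^sup>2) (2 * k - 1) \<Longrightarrow> val_ge v x k"
  using val_power2[of x] unfolding val_ge_def by (cases "x = 0") auto

lemma val_ge_one_iff [simp]: "val_ge v 1 k \<longleftrightarrow> k \<le> 0"
  by (simp add: val_ge_def)

lemma val_ring_submodule: "o_submodule v (val_ring v)"
  unfolding o_submodule_def by (auto simp: val_ring_iff_val_ge intro: val_ge_add val_ge_mult_integral)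

end

definition residue_class :: "('a::field \<Rightarrow> int) \<Rightarrow> 'a \<Rightarrow> 'a set" where
  "residue_class v x = {y. val_ge v (y - x) 1}"

definition square_class :: "('a::field \<Rightarrow> int) \<Rightarrow> 'a set \<Rightarrow> 'a set" where
  "square_class v C = {y. \<exists>x\<in>C. val_ge v (y - x\<^sup>2) 1}"

context valued_field
begin

lemma residue_class_eq_iff: "residue_class v x = residue_class v y \<longleftrightarrow> val_ge v (x - y) 1"
proof
  assume "residue_class v x = residue_class v y"
  moreover have "x \<in> residue_class v x" by (simp add: residue_class_def)
  ultimately show "val_ge v (x - y) 1" by (simp add: residue_class_def)
next
  assume xy: "val_ge v (x - y) 1"
  have "val_ge v (z - x) 1 \<longleftrightarrow> val_ge v (z - y) 1" for z
    using val_ge_add[OF _ xy, of "z - x"] val_ge_diff[OF _ xy, of "z - y"] by auto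
  then show "residue_class v x = residue_class v y" by (auto simp: residue_class_def)
qed

lemma finite_residue_classes:
  assumes "finite_residue_field v"
  shows "finite (residue_class v ` {x. val_ge v x 0})"
proof -
  obtain S where S: "finite S" "\<forall>x\<in>val_ring v. \<exists>s\<in>S. x - s \<in> val_ideal v"
    using assms unfolding finite_residue_field_def by blast
  have "residue_class v x \<in> residue_class v ` S" if x: "val_ge v x 0" for x
  proof -
    obtain s where "s \<in> S" "val_ge v (x - s) 1"
      using S(2) x by (metis val_ring_iff_val_ge val_ideal_iff_val_ge)
    then show ?thesis by (metis image_eqI residue_class_eq_iff)
  qed
  then have "residue_class v ` {x. val_ge v x 0} \<subseteq> residue_class v ` S" by blast
  then show ?thesis using S(1) finite_surj by blast
qed

lemma square_class_residue_class:
  assumes "val_ge v s 0"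
  shows "square_class v (residue_class v s) = residue_class v (s\<^sup>2)"
proof (intro equalityI subsetI)
  fix y assume "y \<in> square_class v (residue_class v s)"
  then obtain x where xs: "val_ge v (x - s) 1" and yx: "val_ge v (y - x\<^sup>2) 1"
    by (auto simp: square_class_def residue_class_def)
  have "val_ge v (x - s + s + s) 0"
    using val_ge_mono[OF xs, of 0] assms by (intro val_ge_add) simp_all
  then have "val_ge v ((x - s) * (x - s + s + s)) (1 + 0)"
    using xs by (rule val_ge_mult[rotated])
  moreover have "(x - s) * (x - s + s + s) = x\<^sup>2 - s\<^sup>2"
    by (simp add: power2_eq_square algebra_simps)
  ultimately have "val_ge v (x\<^sup>2 - s\<^sup>2) 1" by simp
  from val_ge_add[OF yx this] show "y \<in> residue_class v (s\<^sup>2)"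
    by (simp add: residue_class_def)
next
  fix y assume "y \<in> residue_class v (s\<^sup>2)"
  then show "y \<in> square_class v (residue_class v s)"
    by (auto simp: square_class_def residue_class_def intro: exI[of _ s])
qed

lemma congruent_if_squares_congruent:
  assumes two: "val_ge v 2 1" and x: "val_ge v x 0" and y: "val_ge v y 0"
    and sq: "val_ge v (x\<^sup>2 - y\<^sup>2) 1"
  shows "val_ge v (x - y) 1"
proof -
  have "val_ge v (2 * y * (x - y)) (1 + 0 + 0)"
    using val_ge_mult[OF val_ge_mult[OF two y] val_ge_diff[OF x y]] .
  moreover have "(x - y)\<^sup>2 = (x\<^sup>2 - y\<^sup>2) - 2 * y * (x - y)"
    by (simp add: power2_eq_square algebra_simps)
  ultimately have "val_ge v ((x - y)\<^sup>2) (2 * 1 - 1)"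
    using val_ge_diff[OF sq] by simp
  then show ?thesis by (rule val_ge_of_power2)
qed

lemma exists_square_root_mod_p:
  assumes fin: "finite_residue_field v" and two: "val_ge v 2 1" and x: "val_ge v x 0"
  obtains y where "val_ge v y 0" "val_ge v (x - y\<^sup>2) 1"
proof -
  let ?R = "residue_class v ` {s. val_ge v s 0}"
  have "square_class v ` ?R \<subseteq> ?R"
  proof
    fix C assume "C \<in> square_class v ` ?R"
    then obtain s where s: "val_ge v s 0" "C = square_class v (residue_class v s)" by blast
    then have "C = residue_class v (s\<^sup>2)" by (simp add: square_class_residue_class)
    with val_ge_power2_integral[OF s(1)] show "C \<in> ?R" by blast
  qed
  moreover have "inj_on (square_class v) ?R"
  proof (rule inj_onI)
    fix C D assume "C \<in> ?R" "D \<in> ?R" and eq: "square_class v C = square_class v D"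
    then obtain s t where s: "val_ge v s 0" "C = residue_class v s"
      and t: "val_ge v t 0" "D = residue_class v t" by blast
    have "val_ge v (s\<^sup>2 - t\<^sup>2) 1"
      using eq by (simp add: s t square_class_residue_class residue_class_eq_iff)
    then show "C = D"
      using congruent_if_squares_congruent[OF two s(1) t(1)] by (simp add: s t residue_class_eq_iff)
  qed
  ultimately have "square_class v ` ?R = ?R"
    by (intro endo_inj_surj finite_residue_classes fin)
  then have "residue_class v x \<in> square_class v ` ?R"
    using x by blast
  then obtain s where s: "val_ge v s 0" "residue_class v x = square_class v (residue_class v s)"
    by blast
  then show thesis
    using that by (simp add: square_class_residue_class residue_class_eq_iff)
qed

lemma mem_quad_defect_iff:
  "x \<in> quad_defect v \<alpha> \<longleftrightarrow> (\<forall>\<xi>. \<exists>t. val_ge v t 0 \<and> x = (\<alpha> - \<xi>\<^sup>2) * t)"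
  unfolding quad_defect_def val_ring_iff_val_ge by blast

lemma dvd_if_val_ge:
  assumes "\<not> val_ge v d (k + 1)" and "val_ge v x k"
  shows "\<exists>t. val_ge v t 0 \<and> x = d * t"
proof -
  have d: "d \<noteq> 0" "v d \<le> k" using assms(1) by (auto simp: val_ge_def)
  have "val_ge v (x * inverse d) (k + - v d)"
    using val_ge_mult[OF assms(2) val_ge_inverse[OF d(1)]] .
  then have "val_ge v (x * inverse d) 0" using d(2) val_ge_mono by fastforce
  moreover have "x = d * (x * inverse d)" using d(1) by simp
  ultimately show ?thesis by blast
qed

lemma quad_defect_eq_val_ideal_iff:
  assumes \<xi>\<^sub>0: "val_ge v (\<alpha> - \<xi>\<^sub>0\<^sup>2) 1"
  shows "quad_defect v \<alpha> = val_ideal v \<longleftrightarrow> (\<forall>\<xi>. \<not> val_ge v (\<alpha> - \<xi>\<^sup>2) 2)"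
proof
  assume eq: "quad_defect v \<alpha> = val_ideal v"
  show "\<forall>\<xi>. \<not> val_ge v (\<alpha> - \<xi>\<^sup>2) 2"
  proof (intro allI notI)
    fix \<xi> assume deep: "val_ge v (\<alpha> - \<xi>\<^sup>2) 2"
    obtain \<pi> where \<pi>: "\<pi> \<noteq> 0" "v \<pi> = 1" by (rule uniformizer_exists)
    then have "\<pi> \<in> quad_defect v \<alpha>" using eq by (simp add: val_ideal_def)
    then obtain t where "val_ge v t 0" "\<pi> = (\<alpha> - \<xi>\<^sup>2) * t"
      unfolding mem_quad_defect_iff by blast
    then have "val_ge v \<pi> 2" using val_ge_mult[OF deep] by fastforce
    then show False using \<pi> by (simp add: val_ge_def)
  qed
next
  assume shallow: "\<forall>\<xi>. \<not> val_ge v (\<alpha> - \<xi>\<^sup>2) 2"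
  show "quad_defect v \<alpha> = val_ideal v"
  proof (intro equalityI subsetI)
    fix x assume "x \<in> quad_defect v \<alpha>"
    then obtain t where "val_ge v t 0" "x = (\<alpha> - \<xi>\<^sub>0\<^sup>2) * t"
      unfolding mem_quad_defect_iff by blast
    then show "x \<in> val_ideal v"
      using val_ge_mult[OF \<xi>\<^sub>0] by (fastforce simp: val_ideal_iff_val_ge)
  next
    fix x assume "x \<in> val_ideal v"
    then show "x \<in> quad_defect v \<alpha>"
      using shallow dvd_if_val_ge[of _ 1 x]
      by (simp add: mem_quad_defect_iff val_ideal_iff_val_ge)
  qed
qed

end

definition primitive_zero_mod_p2 :: "('a::field \<Rightarrow> int) \<Rightarrow> 'a \<Rightarrow> 'a \<Rightarrow> 'a \<Rightarrow> bool" where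
  "primitive_zero_mod_p2 v lam a b \<longleftrightarrow>
     val_ge v a 0 \<and> val_ge v b 0 \<and> \<not> (val_ge v a 1 \<and> val_ge v b 1) \<and>
     val_ge v (a\<^sup>2 + lam * b\<^sup>2) 2"

context valued_field
begin

lemma primitive_zero_mod_p2_if_square_mod_p2:
  assumes lam: "val_ge v lam 0" and \<xi>: "val_ge v (- lam - \<xi>\<^sup>2) 2"
  shows "primitive_zero_mod_p2 v lam \<xi> 1"
proof -
  have "val_ge v (\<xi>\<^sup>2) 0"
    using val_ge_diff[of "- lam" 0 "- lam - \<xi>\<^sup>2"] val_ge_mono[OF \<xi>, of 0] lam by simp
  then have "val_ge v \<xi> 0"
    using val_ge_of_power2[of \<xi> 0] val_ge_mono by fastforce
  moreover have "val_ge v (\<xi>\<^sup>2 + lam * 1\<^sup>2) 2"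
    using \<xi> val_ge_minus_iff[of "- lam - \<xi>\<^sup>2" 2] by simp
  ultimately show ?thesis
    by (simp add: primitive_zero_mod_p2_def)
qed

lemma not_primitive_zero_mod_p2_if_val_one:
  assumes lam: "lam \<noteq> 0" "v lam = 1"
  shows "\<not> primitive_zero_mod_p2 v lam a b"
proof
  assume "primitive_zero_mod_p2 v lam a b"
  then have a: "val_ge v a 0" and b: "val_ge v b 0" and ab: "\<not> (val_ge v a 1 \<and> val_ge v b 1)"
    and q: "val_ge v (a\<^sup>2 + lam * b\<^sup>2) 2"
    by (auto simp: primitive_zero_mod_p2_def)
  have "val_ge v (lam * b\<^sup>2) 1"
    using val_ge_mult[OF val_ge_self[of v lam] val_ge_power2[OF b]] lam by simp
  then have "val_ge v (a\<^sup>2) 1"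
    using val_ge_diff[OF val_ge_mono[OF q, of 1]] by fastforce
  then have a1: "val_ge v a 1"
    using val_ge_of_power2[of a 1] by simp
  have "val_ge v ((a\<^sup>2 + lam * b\<^sup>2) - a\<^sup>2) 2"
    using val_ge_diff[OF q, of "a\<^sup>2"] val_ge_power2[OF a1] by simp
  then have "lam * b\<^sup>2 = 0 \<or> 2 \<le> 1 + 2 * v b"
    using val_mult[of lam "b\<^sup>2"] val_power2[of b] lam by (cases "b = 0") (auto simp: val_ge_def)
  then have "val_ge v b 1" using lam by (auto simp: val_ge_def)
  with a1 ab show False by blast
qed

text \<open>For a unit \<open>\<lambda>\<close> the vector \<open>(a, b)\<close> is primitive only if \<open>b\<close> is a unit, and then
  \<open>\<xi> = a / b\<close> works.\<close>

lemma square_mod_p2_if_primitive_zero_mod_p2: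
  assumes lam: "lam \<noteq> 0" "v lam = 0" and prim: "primitive_zero_mod_p2 v lam a b"
  shows "val_ge v (- lam - (a / b)\<^sup>2) 2"
proof -
  from prim have a: "val_ge v a 0" and b: "val_ge v b 0" and ab: "\<not> (val_ge v a 1 \<and> val_ge v b 1)"
    and q: "val_ge v (a\<^sup>2 + lam * b\<^sup>2) 2"
    by (auto simp: primitive_zero_mod_p2_def)
  have "\<not> val_ge v b 1"
  proof
    assume b1: "val_ge v b 1"
    have "val_ge v (lam * b\<^sup>2) 2"
      using val_ge_mult[OF val_ge_self[of v lam] val_ge_power2[OF b1]] lam by simp
    then have "val_ge v (a\<^sup>2) 2"
      using val_ge_diff[OF q] by fastforce
    then have "val_ge v a 1"
      using val_ge_of_power2[of a 1] val_ge_mono by fastforce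
    with ab b1 show False by blast
  qed
  then have b0: "b \<noteq> 0" "v b = 0" using b by (auto simp: val_ge_def)
  have eq: "- lam - (a / b)\<^sup>2 = - (a\<^sup>2 + lam * b\<^sup>2) * (inverse b)\<^sup>2"
    using b0(1) by (simp add: field_simps power2_eq_square)
  have "val_ge v (- (a\<^sup>2 + lam * b\<^sup>2)) 2" using q by (simp only: val_ge_minus_iff)
  from val_ge_mult[OF this val_ge_power2[OF val_ge_inverse[OF b0(1)]]]
  show ?thesis unfolding eq using b0(2) by simp
qed

lemma ex_primitive_zero_mod_p2_iff:
  assumes "lam \<noteq> 0" "v lam \<in> {0, 1}"
  shows "(\<exists>a b. primitive_zero_mod_p2 v lam a b) \<longleftrightarrow> (\<exists>\<xi>. val_ge v (- lam - \<xi>\<^sup>2) 2)"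
proof
  assume "\<exists>a b. primitive_zero_mod_p2 v lam a b"
  then obtain a b where prim: "primitive_zero_mod_p2 v lam a b" by blast
  with assms not_primitive_zero_mod_p2_if_val_one have "v lam = 0" by auto
  with assms(1) prim show "\<exists>\<xi>. val_ge v (- lam - \<xi>\<^sup>2) 2"
    by (blast intro: square_mod_p2_if_primitive_zero_mod_p2)
next
  assume "\<exists>\<xi>. val_ge v (- lam - \<xi>\<^sup>2) 2"
  moreover have "val_ge v lam 0" using assms by (auto simp: val_ge_def)
  ultimately show "\<exists>a b. primitive_zero_mod_p2 v lam a b"
    using primitive_zero_mod_p2_if_square_mod_p2 by blast
qed

end

lemma smul2_Pair [simp]: "smul2 c (x, y) = (c * x, c * y)"
  by (simp add: smul2_def)

lemma span2_basis: "span2 R {(1, 0), (0, 1)} = R \<times> R"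
proof
  show "span2 R {(1, 0), (0, 1)} \<subseteq> R \<times> R" unfolding span2_def by auto
  show "R \<times> R \<subseteq> span2 R {(1, 0), (0, 1)}"
  proof
    fix z assume "z \<in> R \<times> R"
    then show "z \<in> span2 R {(1, 0), (0, 1)}" unfolding span2_def
      by (intro CollectI exI[of _ "\<lambda>g. if g = (1, 0) then fst z else snd z"]) (auto simp: prod_eq_iff)
  qed
qed

lemma span2_basis_insert:
  fixes R :: "'a::field set"
  assumes "w \<notin> {(1, 0), (0, 1)}"
  shows "z \<in> span2 R {(1, 0), (0, 1), w} \<longleftrightarrow>
    (\<exists>c\<^sub>1\<in>R. \<exists>c\<^sub>2\<in>R. \<exists>c\<^sub>3\<in>R. z = (c\<^sub>1 + c\<^sub>3 * fst w, c\<^sub>2 + c\<^sub>3 * snd w))"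
proof
  assume "z \<in> span2 R {(1, 0), (0, 1), w}"
  then obtain c where c: "\<forall>g\<in>{(1, 0), (0, 1), w}. c g \<in> R"
    and z: "z = (\<Sum>g\<in>{(1, 0), (0, 1), w}. smul2 (c g) g)"
    unfolding span2_def by blast
  have "z = (c (1, 0) + c w * fst w, c (0, 1) + c w * snd w)"
    using z assms by (cases w) (auto simp: algebra_simps)
  with c show "\<exists>c\<^sub>1\<in>R. \<exists>c\<^sub>2\<in>R. \<exists>c\<^sub>3\<in>R. z = (c\<^sub>1 + c\<^sub>3 * fst w, c\<^sub>2 + c\<^sub>3 * snd w)"
    by blast
next
  assume "\<exists>c\<^sub>1\<in>R. \<exists>c\<^sub>2\<in>R. \<exists>c\<^sub>3\<in>R. z = (c\<^sub>1 + c\<^sub>3 * fst w, c\<^sub>2 + c\<^sub>3 * snd w)"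
  then obtain c\<^sub>1 c\<^sub>2 c\<^sub>3 where c: "c\<^sub>1 \<in> R" "c\<^sub>2 \<in> R" "c\<^sub>3 \<in> R"
    and z: "z = (c\<^sub>1 + c\<^sub>3 * fst w, c\<^sub>2 + c\<^sub>3 * snd w)" by blast
  define c where "c (g :: 'a \<times> 'a) = (if g = (1, 0) then c\<^sub>1 else if g = (0, 1) then c\<^sub>2 else c\<^sub>3)" for g
  have "z = (\<Sum>g\<in>{(1, 0), (0, 1), w}. smul2 (c g) g)"
    using z assms unfolding c_def by (cases w) (auto simp: algebra_simps)
  moreover have "\<forall>g\<in>{(1, 0), (0, 1), w}. c g \<in> R" using c unfolding c_def by auto
  ultimately show "z \<in> span2 R {(1, 0), (0, 1), w}" unfolding span2_def by blast
qed

lemma span2_smul: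
  assumes "\<forall>a\<in>R. \<forall>b\<in>R. a * b \<in> R" "t \<in> R" "z \<in> span2 R G"
  shows "smul2 t z \<in> span2 R G"
proof -
  obtain c where c: "\<forall>g\<in>G. c g \<in> R" and z: "z = (\<Sum>g\<in>G. smul2 (c g) g)"
    using assms(3) unfolding span2_def by blast
  have "smul2 t z = (\<Sum>g\<in>G. smul2 (t * c g) g)"
    unfolding z smul2_def by (simp add: fst_sum snd_sum sum_distrib_left mult.assoc sum_prod)
  moreover have "\<forall>g\<in>G. t * c g \<in> R" using c assms(1,2) by blast
  ultimately show ?thesis unfolding span2_def
    by (intro CollectI exI[of _ "\<lambda>g. t * c g"] conjI) auto
qed

lemma is_latticeI:
  assumes "finite G" "L = span2 (val_ring v) G" "(1, 0) \<in> L" "(0, 1) \<in> L"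
  shows "is_lattice v L"
  unfolding is_lattice_def
proof (intro conjI allI)
  show "\<exists>G. finite G \<and> L = span2 (val_ring v) G" using assms(1,2) by blast
  fix z :: "'a \<times> 'a"
  have "z \<in> span2 UNIV {(1, 0), (0, 1)}" by (simp add: span2_basis)
  then show "\<exists>G. finite G \<and> G \<subseteq> L \<and> z \<in> span2 UNIV G"
    using assms(3,4) by (intro exI[of _ "{(1, 0), (0, 1)}"]) simp
qed

context valued_field
begin

lemma lattice_norm_subset_val_ring_iff:
  "lattice_norm v q L \<subseteq> val_ring v \<longleftrightarrow> q ` L \<subseteq> val_ring v"
proof
  assume "lattice_norm v q L \<subseteq> val_ring v"
  moreover have "q ` L \<subseteq> lattice_norm v q L" unfolding lattice_norm_def o_gen_def by blast
  ultimately show "q ` L \<subseteq> val_ring v" by blast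
next
  assume "q ` L \<subseteq> val_ring v"
  then show "lattice_norm v q L \<subseteq> val_ring v"
    unfolding lattice_norm_def o_gen_def using val_ring_submodule by blast
qed

lemma is_lattice_unit_lattice: "is_lattice v (val_ring v \<times> val_ring v)"
  by (rule is_latticeI[of "{(1, 0), (0, 1)}"]) (auto simp: span2_basis val_ring_iff_val_ge)

lemma exists_coordinate_of_min_val:
  assumes "(w\<^sub>1, w\<^sub>2) \<notin> val_ring v \<times> val_ring v"
  shows "\<exists>u. u \<noteq> 0 \<and> v u < 0 \<and> val_ge v w\<^sub>1 (v u) \<and> val_ge v w\<^sub>2 (v u) \<and> (w\<^sub>1 = u \<or> w\<^sub>2 = u)"
proof (cases "w\<^sub>1 \<noteq> 0 \<and> val_ge v w\<^sub>2 (v w\<^sub>1)")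
  case True
  with assms have "v w\<^sub>1 < 0" by (auto simp: val_ring_iff_val_ge val_ge_def)
  with True show ?thesis by (auto simp: val_ge_self)
next
  case False
  with assms have "w\<^sub>2 \<noteq> 0" "v w\<^sub>2 < 0" "val_ge v w\<^sub>1 (v w\<^sub>2)"
    by (auto simp: val_ring_iff_val_ge val_ge_def)
  then show ?thesis by (auto simp: val_ge_self)
qed

text \<open>Rescale a vector outside \<open>o\<^sup>2\<close> so that its coordinate of least valuation becomes
  \<open>1 / \<pi>\<close>; its \<open>\<pi>\<close>-multiple is then primitive with form value in \<open>p\<^sup>2\<close>.\<close>

lemma primitive_zero_mod_p2_if_superlattice:
  assumes L: "is_lattice v L" "val_ring v \<times> val_ring v \<subset> L"
    and norm: "\<forall>z\<in>L. val_ge v ((fst z)\<^sup>2 + lam * (snd z)\<^sup>2) 0"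
  shows "\<exists>a b. primitive_zero_mod_p2 v lam a b"
proof -
  obtain G where G: "L = span2 (val_ring v) G" using L(1) unfolding is_lattice_def by blast
  obtain w\<^sub>1 w\<^sub>2 where w: "(w\<^sub>1, w\<^sub>2) \<in> L" "(w\<^sub>1, w\<^sub>2) \<notin> val_ring v \<times> val_ring v"
    using L(2) by auto
  obtain u where u: "u \<noteq> 0" "v u < 0" "val_ge v w\<^sub>1 (v u)" "val_ge v w\<^sub>2 (v u)"
    "w\<^sub>1 = u \<or> w\<^sub>2 = u"
    using exists_coordinate_of_min_val[OF w(2)] by blast
  obtain \<pi> where \<pi>: "\<pi> \<noteq> 0" "v \<pi> = 1" by (rule uniformizer_exists)
  define a b where "a = w\<^sub>1 / u" and "b = w\<^sub>2 / u"
  have a: "val_ge v a 0" and b: "val_ge v b 0"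
    using val_ge_mult[OF u(3) val_ge_inverse[OF u(1)]] val_ge_mult[OF u(4) val_ge_inverse[OF u(1)]]
    by (simp_all add: a_def b_def divide_inverse)
  have "a = 1 \<or> b = 1" using u(1,5) by (auto simp: a_def b_def)
  then have primitive: "\<not> (val_ge v a 1 \<and> val_ge v b 1)" by auto
  have "val_ge v (inverse (\<pi> * u)) (- v (\<pi> * u))"
    using \<pi>(1) u(1) by (intro val_ge_inverse) simp
  then have "inverse (\<pi> * u) \<in> val_ring v"
    using val_mult[OF \<pi>(1) u(1)] \<pi>(2) u(2) val_ge_mono
    by (fastforce simp: val_ring_iff_val_ge)
  moreover have "\<forall>x\<in>val_ring v. \<forall>y\<in>val_ring v. x * y \<in> val_ring v"
    by (simp add: val_ring_iff_val_ge val_ge_mult_integral)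
  ultimately have "smul2 (inverse (\<pi> * u)) (w\<^sub>1, w\<^sub>2) \<in> L"
    using span2_smul w(1) unfolding G by blast
  moreover have "smul2 (inverse (\<pi> * u)) (w\<^sub>1, w\<^sub>2) = (a / \<pi>, b / \<pi>)"
    using \<pi>(1) u(1) by (simp add: a_def b_def field_simps)
  ultimately have "val_ge v ((a / \<pi>)\<^sup>2 + lam * (b / \<pi>)\<^sup>2) 0"
    using norm by fastforce
  from val_ge_mult[OF this val_ge_power2[OF val_ge_self[of v \<pi>]]]
  have "val_ge v (((a / \<pi>)\<^sup>2 + lam * (b / \<pi>)\<^sup>2) * \<pi>\<^sup>2) 2"
    using \<pi>(2) by simp
  moreover have "((a / \<pi>)\<^sup>2 + lam * (b / \<pi>)\<^sup>2) * \<pi>\<^sup>2 = a\<^sup>2 + lam * b\<^sup>2"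
    using \<pi>(1) by (simp add: field_simps power2_eq_square)
  ultimately have "val_ge v (a\<^sup>2 + lam * b\<^sup>2) 2" by simp
  with a b primitive show ?thesis
    unfolding primitive_zero_mod_p2_def by blast
qed

text \<open>Integrality of the form on \<open>o\<^sup>2 + o (a, b) / \<pi>\<close>: the cross terms carry the factor
  \<open>2 / \<pi>\<close>, which is integral because \<open>2 \<in> p\<close>.\<close>

lemma val_ge_form_adjoined:
  assumes two: "val_ge v 2 1" and lam: "val_ge v lam 0" and \<pi>: "\<pi> \<noteq> 0" "v \<pi> = 1"
    and a: "val_ge v a 0" and b: "val_ge v b 0" and q: "val_ge v (a\<^sup>2 + lam * b\<^sup>2) 2"
    and c: "val_ge v c\<^sub>1 0" "val_ge v c\<^sub>2 0" "val_ge v c\<^sub>3 0"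
  shows "val_ge v ((c\<^sub>1 + c\<^sub>3 * (a / \<pi>))\<^sup>2 + lam * (c\<^sub>2 + c\<^sub>3 * (b / \<pi>))\<^sup>2) 0"
proof -
  have expand: "(c\<^sub>1 + c\<^sub>3 * (a / \<pi>))\<^sup>2 + lam * (c\<^sub>2 + c\<^sub>3 * (b / \<pi>))\<^sup>2 =
      (c\<^sub>1\<^sup>2 + lam * c\<^sub>2\<^sup>2) + c\<^sub>3\<^sup>2 * ((a\<^sup>2 + lam * b\<^sup>2) * (inverse \<pi>)\<^sup>2)
      + (2 * inverse \<pi>) * (c\<^sub>1 * c\<^sub>3 * a + lam * c\<^sub>2 * c\<^sub>3 * b)"
    by (simp add: divide_inverse power2_eq_square algebra_simps)
  have square_terms: "val_ge v (c\<^sub>1\<^sup>2 + lam * c\<^sub>2\<^sup>2) 0"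
    using c by (simp add: val_ge_add val_ge_mult_integral val_ge_power2_integral lam)
  have "val_ge v ((a\<^sup>2 + lam * b\<^sup>2) * (inverse \<pi>)\<^sup>2) (2 + 2 * - 1)"
    using val_ge_mult[OF q val_ge_power2[OF val_ge_inverse[OF \<pi>(1)]]] \<pi>(2) by simp
  then have middle_term: "val_ge v (c\<^sub>3\<^sup>2 * ((a\<^sup>2 + lam * b\<^sup>2) * (inverse \<pi>)\<^sup>2)) 0"
    using c(3) by (simp add: val_ge_mult_integral val_ge_power2_integral)
  have "val_ge v (2 * inverse \<pi>) (1 + - 1)"
    using val_ge_mult[OF two val_ge_inverse[OF \<pi>(1)]] \<pi>(2) by simp
  then have cross_terms: "val_ge v ((2 * inverse \<pi>) * (c\<^sub>1 * c\<^sub>3 * a + lam * c\<^sub>2 * c\<^sub>3 * b)) 0"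
    using a b c lam by (simp add: val_ge_add val_ge_mult_integral)
  show ?thesis
    unfolding expand by (rule val_ge_add[OF val_ge_add[OF square_terms middle_term] cross_terms])
qed

lemma superlattice_if_primitive_zero_mod_p2:
  assumes two: "val_ge v 2 1" and lam: "val_ge v lam 0" and prim: "primitive_zero_mod_p2 v lam a b"
  obtains L where "is_lattice v L" "val_ring v \<times> val_ring v \<subset> L"
    "\<forall>z\<in>L. val_ge v ((fst z)\<^sup>2 + lam * (snd z)\<^sup>2) 0"
proof -
  from prim have a: "val_ge v a 0" and b: "val_ge v b 0"
    and primitive: "\<not> (val_ge v a 1 \<and> val_ge v b 1)" and q: "val_ge v (a\<^sup>2 + lam * b\<^sup>2) 2"
    by (auto simp: primitive_zero_mod_p2_def)
  obtain \<pi> where \<pi>: "\<pi> \<noteq> 0" "v \<pi> = 1" by (rule uniformizer_exists)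
  define w where "w = (a / \<pi>, b / \<pi>)"
  have "\<not> val_ge v (x / \<pi>) 0" if "val_ge v x 0" "\<not> val_ge v x 1" for x
    using that val_mult[of x "inverse \<pi>"] val_inverse[OF \<pi>(1)] \<pi>
    by (auto simp: val_ge_def divide_inverse)
  then have w_new: "w \<notin> val_ring v \<times> val_ring v"
    using a b primitive by (auto simp: w_def val_ring_iff_val_ge)
  then have "w \<notin> {(1, 0), (0, 1)}" by (auto simp: val_ring_iff_val_ge)
  define L where "L = span2 (val_ring v) {(1, 0), (0, 1), w}"
  have mem_L: "z \<in> L \<longleftrightarrow> (\<exists>c\<^sub>1\<in>val_ring v. \<exists>c\<^sub>2\<in>val_ring v. \<exists>c\<^sub>3\<in>val_ring v.
      z = (c\<^sub>1 + c\<^sub>3 * fst w, c\<^sub>2 + c\<^sub>3 * snd w))" for z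
    unfolding L_def by (rule span2_basis_insert) fact
  have zero_one: "0 \<in> val_ring v" "1 \<in> val_ring v" by (simp_all add: val_ring_iff_val_ge)
  have unit_sub: "val_ring v \<times> val_ring v \<subseteq> L"
    using zero_one by (force simp: mem_L)
  moreover have "w \<in> L" using zero_one by (force simp: mem_L)
  ultimately have "val_ring v \<times> val_ring v \<subset> L" using w_new by blast
  moreover have "is_lattice v L"
    using unit_sub zero_one by (intro is_latticeI[of "{(1, 0), (0, 1), w}"]) (auto simp: L_def)
  moreover have "\<forall>z\<in>L. val_ge v ((fst z)\<^sup>2 + lam * (snd z)\<^sup>2) 0"
    using val_ge_form_adjoined[OF two lam \<pi> a b q]
    by (auto simp: mem_L w_def val_ring_iff_val_ge)
  ultimately show thesis using that by blast
qed

lemma o_maximal_unit_lattice_iff: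
  assumes "val_ge v 2 1" and "val_ge v lam 0"
  shows "o_maximal v (\<lambda>(x, y). x\<^sup>2 + lam * y\<^sup>2) (val_ring v \<times> val_ring v) \<longleftrightarrow>
    \<not> (\<exists>a b. primitive_zero_mod_p2 v lam a b)"
proof -
  have norm_iff: "lattice_norm v (\<lambda>(x, y). x\<^sup>2 + lam * y\<^sup>2) L \<subseteq> val_ring v \<longleftrightarrow>
      (\<forall>z\<in>L. val_ge v ((fst z)\<^sup>2 + lam * (snd z)\<^sup>2) 0)" for L
    by (auto simp: lattice_norm_subset_val_ring_iff val_ring_iff_val_ge)
  have "lattice_norm v (\<lambda>(x, y). x\<^sup>2 + lam * y\<^sup>2) (val_ring v \<times> val_ring v) \<subseteq> val_ring v"
    using assms(2) by (auto simp: norm_iff val_ring_iff_val_ge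
        intro!: val_ge_add val_ge_mult_integral val_ge_power2_integral)
  then show ?thesis
    unfolding o_maximal_def norm_iff
    using is_lattice_unit_lattice primitive_zero_mod_p2_if_superlattice
      superlattice_if_primitive_zero_mod_p2[OF assms] by metis
qed

end

theorem lemma7p1:
  fixes v :: "'a::field_char_0 \<Rightarrow> int" and lam :: 'a
  assumes "dyadic_local_field v"
    and "lam \<in> val_ring v" and "lam \<noteq> 0" and "v lam \<in> {0, 1}"
  shows "o_maximal v (\<lambda>(x, y). x^2 + lam * y^2) (val_ring v \<times> val_ring v)
     \<longleftrightarrow> quad_defect v (- lam) = val_ideal v"
proof -
  interpret valued_field v
    using assms(1) by unfold_locales (simp add: dyadic_local_field_def)
  have two: "val_ge v 2 1" and fin: "finite_residue_field v"
    using assms(1) by (simp_all add: dyadic_local_field_def val_ideal_iff_val_ge)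
  have lam: "val_ge v lam 0" using assms(2) by (simp add: val_ring_iff_val_ge)
  obtain \<xi>\<^sub>0 where "val_ge v (- lam - \<xi>\<^sub>0\<^sup>2) 1"
    using exists_square_root_mod_p[OF fin two, of "- lam"] lam by auto
  then have "quad_defect v (- lam) = val_ideal v \<longleftrightarrow> (\<forall>\<xi>. \<not> val_ge v (- lam - \<xi>\<^sup>2) 2)"
    by (rule quad_defect_eq_val_ideal_iff)
  also have "\<dots> \<longleftrightarrow> \<not> (\<exists>a b. primitive_zero_mod_p2 v lam a b)"
    using ex_primitive_zero_mod_p2_iff[OF assms(3,4)] by blast
  also have "\<dots> \<longleftrightarrow> o_maximal v (\<lambda>(x, y). x\<^sup>2 + lam * y\<^sup>2) (val_ring v \<times> val_ring v)"
    using o_maximal_unit_lattice_iff[OF two lam] by blast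
  finally show ?thesis by blast
qed

end
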